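(* Let $m\ge 2$ be an integer and let $G$ be a graph without isolated vertices containing no induced subgraph isomorphic to $K_{1,m}$. Then $\tilde{H}_k(\operatorname{ind}(G);\mathbf{k})=0$ for all \[k\le\left\lceil\frac{\dim(\operatorname{ind}(G))-2m+3}{m-1}\right\rceil.\]
   Context: All graphs are finite and simple; $\mathbf{k}$ is a fixed field. $K_{1,m}$ is the complete bipartite graph with parts of sizes $1$ and $m$. $\operatorname{ind}(G)$ is the simplicial complex on $V(G)$ whose faces are the independent sets of $G$; its dimension is one less than the maximum size of an independent set. $\tilde H_k$ denotes reduced simplicial homology with coefficients in $\mathbf{k}$. *)

theory Defs
  imports Complex_Main
begin

definition simple_graph :: "'a set \<Rightarrow> ('a \<Rightarrow> 'a \<Rightarrow> bool) \<Rightarrow> bool" where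
  "simple_graph V adj \<longleftrightarrow> finite V \<and>
     (\<forall>x y. adj x y \<longrightarrow> x \<in> V \<and> y \<in> V) \<and>
     (\<forall>x y. adj x y \<longrightarrow> adj y x) \<and> (\<forall>x. \<not> adj x x)"

definition no_isolated_vertices :: "'a set \<Rightarrow> ('a \<Rightarrow> 'a \<Rightarrow> bool) \<Rightarrow> bool" where
  "no_isolated_vertices V adj \<longleftrightarrow> (\<forall>v\<in>V. \<exists>u\<in>V. adj v u)"

definition has_induced_star :: "'a set \<Rightarrow> ('a \<Rightarrow> 'a \<Rightarrow> bool) \<Rightarrow> nat \<Rightarrow> bool" where
  "has_induced_star V adj m \<longleftrightarrow> (\<exists>c L. c \<in> V \<and> L \<subseteq> V \<and> c \<notin> L \<and> card L = m \<and>
     (\<forall>x\<in>L. adj c x) \<and> (\<forall>x\<in>L. \<forall>y\<in>L. \<not> adj x y))"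

definition independent_set :: "'a set \<Rightarrow> ('a \<Rightarrow> 'a \<Rightarrow> bool) \<Rightarrow> 'a set \<Rightarrow> bool" where
  "independent_set V adj S \<longleftrightarrow> S \<subseteq> V \<and> (\<forall>x\<in>S. \<forall>y\<in>S. \<not> adj x y)"

definition ind_complex :: "'a set \<Rightarrow> ('a \<Rightarrow> 'a \<Rightarrow> bool) \<Rightarrow> 'a set set" where
  "ind_complex V adj = {S. independent_set V adj S}"

definition complex_dim :: "'a set set \<Rightarrow> int" where
  "complex_dim K = int (Max (card ` K)) - 1"

(* The empty face is the
   unique (-1)-face, giving the augmented (reduced) chain complex. *)
definition chains :: "'a set set \<Rightarrow> int \<Rightarrow> ('a set \<Rightarrow> 'f::field) set" where
  "chains K k = {c. \<forall>\<sigma>. c \<sigma> \<noteq> 0 \<longrightarrow> \<sigma> \<in> K \<and> int (card \<sigma>) = k + 1}"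

(* Boundary map with the orientation induced by the linear order on vertices:
   d[v_0,...,v_k] = sum_i (-1)^i [v_0,..,^v_i,..,v_k].  Coefficient of tau in
   d c: sum over v not in tau with insert v tau a face; v sits at position
   card {u in tau. u < v} in the sorted simplex insert v tau. *)
definition boundary :: "'a::linorder set set \<Rightarrow> ('a set \<Rightarrow> 'f::field) \<Rightarrow> ('a set \<Rightarrow> 'f)" where
  "boundary K c = (\<lambda>\<tau>. if \<tau> \<in> K then
      (\<Sum>v\<in>(\<Union>K) - \<tau>. if insert v \<tau> \<in> K
          then (-1) ^ card {u\<in>\<tau>. u < v} * c (insert v \<tau>) else 0)
     else 0)"

definition reduced_homology_vanishes :: "'f::field itself \<Rightarrow> 'a::linorder set set \<Rightarrow> int \<Rightarrow> bool" where
  "reduced_homology_vanishes TYPE('f) K k \<longleftrightarrow>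
     (\<forall>c \<in> (chains K k :: ('a set \<Rightarrow> 'f) set). boundary K c = (\<lambda>_. 0) \<longrightarrow>
        (\<exists>d \<in> (chains K (k + 1) :: ('a set \<Rightarrow> 'f) set). boundary K d = c))"

end

theory Submission
  imports Defs
begin

(* For a vertex v of a simplicial complex K, the relative homology of (K, deletion K v) is the
   homology of link K v shifted by one, so vanishing of H_(k-1) of the link and of H_k of the
   deletion forces H_k(K) = 0; a cone (link = deletion) is acyclic. In ind(G) the deletion of v is
   ind(G - v) and its link is ind(G - N[v]). Given an independent set I with |I| >= (k+1)(m-1)+1,
   pick v outside I (if there is none, V = I is independent, so any vertex is isolated and ind(G)
   is a cone): I survives in G - v, and since G has no induced K_{1,m}, v has fewer than m
   neighbours in I, so I - N(v) is large enough for degree k - 1 in G - N[v]. Induction on the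
   number of vertices, applied to a maximum independent set (of size dim + 1), gives the bound. *)

definition simplicial_complex :: "'a set set \<Rightarrow> bool" where
  "simplicial_complex K \<longleftrightarrow> finite (\<Union>K) \<and> (\<forall>\<sigma>\<in>K. \<forall>\<tau>\<subseteq>\<sigma>. \<tau> \<in> K)"

definition link :: "'a set set \<Rightarrow> 'a \<Rightarrow> 'a set set" where
  "link K v = {\<sigma>. v \<notin> \<sigma> \<and> insert v \<sigma> \<in> K}"

definition deletion :: "'a set set \<Rightarrow> 'a \<Rightarrow> 'a set set" where
  "deletion K v = {\<sigma>\<in>K. v \<notin> \<sigma>}"

definition face_sign :: "'a::linorder set \<Rightarrow> 'a \<Rightarrow> 'f::field" where
  "face_sign \<sigma> v = (-1) ^ card {u\<in>\<sigma>. u < v}"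

subsection \<open>Orientation signs\<close>

lemma face_sign_square: "(face_sign \<sigma> v :: 'f::field) * face_sign \<sigma> v = 1"
  by (simp add: face_sign_def flip: power_add)

lemma face_sign_nonzero: "(face_sign \<sigma> v :: 'f::field) \<noteq> 0"
  by (simp add: face_sign_def)

lemma face_sign_insert:
  assumes "finite \<sigma>" "u \<notin> \<sigma>"
  shows "(face_sign (insert u \<sigma>) v :: 'f::field) = face_sign \<sigma> v * (if u < v then -1 else 1)"
proof (cases "u < v")
  case True
  then have "{x\<in>insert u \<sigma>. x < v} = insert u {x\<in>\<sigma>. x < v}" by auto
  with True assms show ?thesis by (simp add: face_sign_def)
next
  case False
  then have "{x\<in>insert u \<sigma>. x < v} = {x\<in>\<sigma>. x < v}" by auto
  with False show ?thesis by (simp add: face_sign_def)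
qed

lemma face_sign_swap:
  assumes "finite \<tau>" "u \<notin> \<tau>" "v \<notin> \<tau>" "u \<noteq> v"
  shows "(face_sign (insert v \<tau>) u :: 'f::field) =
    - face_sign \<tau> v * face_sign \<tau> u * face_sign (insert u \<tau>) v"
proof -
  have "(face_sign \<tau> v :: 'f) * face_sign \<tau> v = 1" by (rule face_sign_square)
  with assms show ?thesis
    by (cases "u < v") (auto simp: face_sign_insert algebra_simps)
qed

subsection \<open>Chains and the boundary map\<close>

lemma chains_zero: "(\<lambda>_. 0) \<in> chains K k"
  by (simp add: chains_def)

lemma chains_mono: "K \<subseteq> L \<Longrightarrow> c \<in> chains K k \<Longrightarrow> c \<in> chains L k"
  by (auto simp: chains_def)

lemma chains_diff:
  assumes "c \<in> chains K k" "d \<in> chains K k"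
  shows "(\<lambda>\<sigma>. c \<sigma> - d \<sigma>) \<in> chains K k"
proof -
  have "c \<sigma> \<noteq> 0 \<or> d \<sigma> \<noteq> 0" if "c \<sigma> - d \<sigma> \<noteq> 0" for \<sigma> using that by auto
  with assms show ?thesis unfolding chains_def by blast
qed

lemma chains_outside: "c \<in> chains K k \<Longrightarrow> \<sigma> \<notin> K \<Longrightarrow> c \<sigma> = 0"
  by (auto simp: chains_def)

lemma boundary_outside: "\<tau> \<notin> K \<Longrightarrow> boundary K c \<tau> = 0"
  by (simp add: boundary_def)

lemma boundary_cong:
  "(\<And>\<sigma>. \<sigma> \<in> K \<Longrightarrow> c \<sigma> = d \<sigma>) \<Longrightarrow> boundary K c = boundary K d"
  unfolding boundary_def by (intro ext) (auto intro!: sum.cong)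

lemma boundary_add:
  "boundary K (\<lambda>\<sigma>. c \<sigma> + d \<sigma>) \<tau> = boundary K c \<tau> + boundary K d \<tau>"
  unfolding boundary_def by (auto simp: sum.distrib[symmetric] algebra_simps intro!: sum.cong)

lemma boundary_uminus: "boundary K (\<lambda>\<sigma>. - c \<sigma>) \<tau> = - boundary K c \<tau>"
  unfolding boundary_def by (auto simp: sum_negf[symmetric] intro!: sum.cong)

lemma boundary_diff:
  "boundary K (\<lambda>\<sigma>. c \<sigma> - d \<sigma>) \<tau> = boundary K c \<tau> - boundary K d \<tau>"
  using boundary_add[of K c "\<lambda>\<sigma>. - d \<sigma>"] boundary_uminus[of K d] by simp

lemma boundary_zero: "boundary K (\<lambda>_. 0::'f::field) = (\<lambda>_. 0)"
  unfolding boundary_def by (rule ext) (simp only: mult_zero_right if_cancel sum.neutral_const)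

lemma boundary_eq_sum:
  assumes "finite U" "\<Union>K \<subseteq> U" "\<tau> \<in> K"
  shows "boundary K c \<tau> =
    (\<Sum>u\<in>U - \<tau>. if insert u \<tau> \<in> K then face_sign \<tau> u * c (insert u \<tau>) else 0)"
  unfolding boundary_def face_sign_def
proof (simp add: assms(3), rule sum.mono_neutral_left)
  show "finite (U - \<tau>)" using assms(1) by simp
  show "\<Union>K - \<tau> \<subseteq> U - \<tau>" using assms(2) by blast
  have "insert u \<tau> \<notin> K" if "u \<notin> \<Union>K" for u using that by blast
  then show "\<forall>u\<in>U - \<tau> - (\<Union>K - \<tau>). (if insert u \<tau> \<in> K
      then (-1) ^ card {x\<in>\<tau>. x < u} * c (insert u \<tau>) else 0) = 0" by auto
qed

lemma boundary_subcomplex: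
  assumes K: "simplicial_complex K" and L: "simplicial_complex L" "L \<subseteq> K"
    and e: "e \<in> chains L j"
  shows "boundary K e \<tau> = (if \<tau> \<in> L then boundary L e \<tau> else 0)"
proof -
  have finK: "finite (\<Union>K)" using K by (simp add: simplicial_complex_def)
  have "boundary K e \<tau> = 0" if "\<tau> \<in> K" "\<tau> \<notin> L"
  proof -
    have "insert u \<tau> \<notin> L" for u
      using L(1) that(2) by (auto simp: simplicial_complex_def)
    then show ?thesis
      unfolding boundary_eq_sum[OF finK subset_refl that(1)]
      using chains_outside[OF e] by (auto intro: sum.neutral)
  qed
  moreover have "boundary K e \<tau> = boundary L e \<tau>" if "\<tau> \<in> L"
  proof -
    have "\<tau> \<in> K" "\<Union>L \<subseteq> \<Union>K" using that L(2) by auto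
    then show ?thesis
      unfolding boundary_eq_sum[OF finK subset_refl \<open>\<tau> \<in> K\<close>]
        boundary_eq_sum[OF finK \<open>\<Union>L \<subseteq> \<Union>K\<close> that]
      using L(2) chains_outside[OF e] by (auto intro!: sum.cong)
  qed
  ultimately show ?thesis by (cases "\<tau> \<in> K") (auto simp: boundary_outside)
qed

subsection \<open>Links and deletions\<close>

lemma simplicial_complex_finite_face:
  "simplicial_complex K \<Longrightarrow> \<sigma> \<in> K \<Longrightarrow> finite \<sigma>"
  unfolding simplicial_complex_def by (meson Union_upper finite_subset)

lemma link_subset_deletion: "simplicial_complex K \<Longrightarrow> link K v \<subseteq> deletion K v"
  by (auto simp: link_def deletion_def simplicial_complex_def)

lemma deletion_subset: "deletion K v \<subseteq> K"
  by (auto simp: deletion_def)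

lemma simplicial_complex_deletion:
  "simplicial_complex K \<Longrightarrow> simplicial_complex (deletion K v)"
  unfolding simplicial_complex_def deletion_def by (auto intro: finite_subset)

lemma simplicial_complex_link:
  assumes "simplicial_complex K" shows "simplicial_complex (link K v)"
  unfolding simplicial_complex_def
proof
  have "\<Union>(link K v) \<subseteq> \<Union>K" by (auto simp: link_def)
  then show "finite (\<Union>(link K v))"
    using assms finite_subset by (auto simp: simplicial_complex_def)
  have "insert v \<tau> \<in> K" if "insert v \<sigma> \<in> K" "\<tau> \<subseteq> \<sigma>" for \<sigma> \<tau>
    using assms that unfolding simplicial_complex_def by (meson insert_mono)
  then show "\<forall>\<sigma>\<in>link K v. \<forall>\<tau>\<subseteq>\<sigma>. \<tau> \<in> link K v"
    unfolding link_def by blast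
qed

lemma face_cases:
  assumes "\<sigma> \<in> K"
  obtains "\<sigma> \<in> deletion K v" | \<tau> where "\<tau> \<in> link K v" "\<sigma> = insert v \<tau>"
proof (cases "v \<in> \<sigma>")
  case True
  then have "\<sigma> - {v} \<in> link K v" "\<sigma> = insert v (\<sigma> - {v})"
    using assms by (auto simp: link_def insert_absorb)
  then show ?thesis using that by blast
qed (use assms that in \<open>auto simp: deletion_def\<close>)

definition link_chain :: "'a::linorder set set \<Rightarrow> 'a \<Rightarrow> ('a set \<Rightarrow> 'f::field) \<Rightarrow> 'a set \<Rightarrow> 'f" where
  "link_chain K v c = (\<lambda>\<sigma>. if \<sigma> \<in> link K v then face_sign \<sigma> v * c (insert v \<sigma>) else 0)"

definition cone_chain :: "'a::linorder set set \<Rightarrow> 'a \<Rightarrow> ('a set \<Rightarrow> 'f::field) \<Rightarrow> 'a set \<Rightarrow> 'f" where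
  "cone_chain K v e = (\<lambda>\<sigma>. if v \<in> \<sigma> \<and> \<sigma> - {v} \<in> link K v
     then face_sign (\<sigma> - {v}) v * e (\<sigma> - {v}) else 0)"

lemma link_chain_chains:
  assumes "simplicial_complex K" "c \<in> chains K k"
  shows "link_chain K v c \<in> chains (link K v) (k - 1)"
  using assms simplicial_complex_finite_face[OF assms(1)]
  by (fastforce simp: chains_def link_chain_def link_def)

lemma cone_chain_chains:
  assumes "simplicial_complex K" "e \<in> chains (link K v) k"
  shows "cone_chain K v e \<in> chains K (k + 1)"
proof -
  have "int (card \<sigma>) = k + 2" if "v \<in> \<sigma>" "\<sigma> - {v} \<in> link K v" "int (card (\<sigma> - {v})) = k + 1" for \<sigma>
  proof -
    have "finite \<sigma>"
      using that simplicial_complex_finite_face[OF assms(1)] by (auto simp: link_def insert_absorb)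
    then have "card \<sigma> \<ge> 1" using that(1) by (metis One_nat_def Suc_leI card_gt_0_iff empty_iff)
    with that \<open>finite \<sigma>\<close> show ?thesis by (simp add: card_Diff_singleton)
  qed
  with assms(2) show ?thesis
    by (auto simp: chains_def cone_chain_def link_def insert_absorb)
qed

lemma link_chain_cone_chain:
  "link_chain K v (cone_chain K v e) = (\<lambda>\<sigma>. if \<sigma> \<in> link K v then e \<sigma> else 0)"
  by (auto simp: link_chain_def cone_chain_def link_def face_sign_square mult.assoc[symmetric])

lemma boundary_insert_link:
  fixes c :: "'a::linorder set \<Rightarrow> 'f::field"
  assumes K: "simplicial_complex K" and \<tau>: "\<tau> \<in> link K v"
  shows "boundary K c (insert v \<tau>) = - face_sign \<tau> v * boundary (link K v) (link_chain K v c) \<tau>"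
proof -
  let ?U = "\<Union>K - {v}"
  have finU: "finite ?U" using K by (simp add: simplicial_complex_def)
  have v\<tau>: "v \<notin> \<tau>" "insert v \<tau> \<in> K" using \<tau> by (auto simp: link_def)
  have fin\<tau>: "finite \<tau>" using simplicial_complex_finite_face[OF K v\<tau>(2)] by simp
  have UL: "\<Union>(link K v) \<subseteq> ?U" by (auto simp: link_def)
  have "\<Union>K - insert v \<tau> = ?U - \<tau>" by blast
  then have "boundary K c (insert v \<tau>) = (\<Sum>u\<in>?U - \<tau>. if insert u (insert v \<tau>) \<in> K
      then face_sign (insert v \<tau>) u * c (insert u (insert v \<tau>)) else 0)"
    using boundary_eq_sum[OF _ subset_refl v\<tau>(2)] K by (simp add: simplicial_complex_def)
  also have "\<dots> = (\<Sum>u\<in>?U - \<tau>. - face_sign \<tau> v * (if insert u \<tau> \<in> link K v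
      then face_sign \<tau> u * link_chain K v c (insert u \<tau>) else 0))"
  proof (rule sum.cong[OF refl])
    fix u assume u: "u \<in> ?U - \<tau>"
    have ins: "insert u (insert v \<tau>) = insert v (insert u \<tau>)" by (rule insert_commute)
    have mem: "insert v (insert u \<tau>) \<in> K \<longleftrightarrow> insert u \<tau> \<in> link K v"
      using u v\<tau> by (auto simp: link_def)
    have sign: "face_sign (insert v \<tau>) u =
        - face_sign \<tau> v * face_sign \<tau> u * (face_sign (insert u \<tau>) v :: 'f)"
      using face_sign_swap[OF fin\<tau>] u v\<tau>(1) by auto
    show "(if insert u (insert v \<tau>) \<in> K
      then face_sign (insert v \<tau>) u * c (insert u (insert v \<tau>)) else 0) =
      - face_sign \<tau> v * (if insert u \<tau> \<in> link K v
      then face_sign \<tau> u * link_chain K v c (insert u \<tau>) else 0)"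
      unfolding ins mem sign by (simp add: link_chain_def mult.assoc)
  qed
  also have "\<dots> = - face_sign \<tau> v * boundary (link K v) (link_chain K v c) \<tau>"
    by (simp add: boundary_eq_sum[OF finU UL \<tau>] sum_distrib_left)
  finally show ?thesis .
qed

lemma boundary_deletion_face:
  fixes c :: "'a::linorder set \<Rightarrow> 'f::field"
  assumes K: "simplicial_complex K" and \<tau>: "\<tau> \<in> deletion K v"
  shows "boundary K c \<tau> = link_chain K v c \<tau> + boundary (deletion K v) c \<tau>"
proof -
  let ?U = "insert v (\<Union>K)"
  let ?term = "\<lambda>u. if insert u \<tau> \<in> K then face_sign \<tau> u * c (insert u \<tau>) else 0"
  have finU: "finite ?U" using K by (simp add: simplicial_complex_def)
  have v\<tau>: "v \<notin> \<tau>" "\<tau> \<in> K" using \<tau> by (auto simp: deletion_def)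
  have "boundary K c \<tau> = (\<Sum>u\<in>?U - \<tau>. ?term u)"
    by (rule boundary_eq_sum[OF finU _ v\<tau>(2)]) blast
  also have "?U - \<tau> = insert v (?U - {v} - \<tau>)" using v\<tau>(1) by blast
  also have "(\<Sum>u\<in>insert v (?U - {v} - \<tau>). ?term u) = ?term v + (\<Sum>u\<in>?U - {v} - \<tau>. ?term u)"
    using finU by (intro sum.insert) auto
  also have "(\<Sum>u\<in>?U - {v} - \<tau>. ?term u) = boundary (deletion K v) c \<tau>"
  proof -
    have "\<Union>(deletion K v) \<subseteq> ?U - {v}" by (auto simp: deletion_def)
    moreover have "insert u \<tau> \<in> K \<longleftrightarrow> insert u \<tau> \<in> deletion K v" if "u \<in> ?U - {v} - \<tau>" for u
      using that v\<tau>(1) by (auto simp: deletion_def)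
    ultimately show ?thesis
      using finU by (simp add: boundary_eq_sum[OF _ _ \<tau>, of "?U - {v}"])
  qed
  finally show ?thesis using v\<tau>(1) by (simp add: link_chain_def link_def)
qed

lemma link_chain_cycle:
  fixes c :: "'a::linorder set \<Rightarrow> 'f::field"
  assumes K: "simplicial_complex K" and c: "boundary K c = (\<lambda>_. 0)"
  shows "boundary (link K v) (link_chain K v c) = (\<lambda>_. 0)"
proof
  fix \<tau>
  show "boundary (link K v) (link_chain K v c) \<tau> = 0"
  proof (cases "\<tau> \<in> link K v")
    case True
    then show ?thesis
      using boundary_insert_link[OF K True, of c] c face_sign_nonzero[of \<tau> v, where 'f='f] by simp
  qed (simp add: boundary_outside)
qed

lemma boundary_cone_chain_insert:
  fixes e :: "'a::linorder set \<Rightarrow> 'f::field"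
  assumes K: "simplicial_complex K" and \<tau>: "\<tau> \<in> link K v"
  shows "boundary K (cone_chain K v e) (insert v \<tau>) = - face_sign \<tau> v * boundary (link K v) e \<tau>"
proof -
  have "boundary (link K v) (link_chain K v (cone_chain K v e)) = boundary (link K v) e"
    by (rule boundary_cong) (simp add: link_chain_cone_chain)
  then show ?thesis using boundary_insert_link[OF K \<tau>, of "cone_chain K v e"] by simp
qed

lemma boundary_cone_chain_deletion:
  fixes e :: "'a::linorder set \<Rightarrow> 'f::field"
  assumes K: "simplicial_complex K" and e: "e \<in> chains (link K v) j" and \<tau>: "\<tau> \<in> deletion K v"
  shows "boundary K (cone_chain K v e) \<tau> = e \<tau>"
proof -
  have "boundary (deletion K v) (cone_chain K v e) = boundary (deletion K v) (\<lambda>_. 0)"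
    by (rule boundary_cong) (auto simp: cone_chain_def deletion_def)
  then show ?thesis
    using boundary_deletion_face[OF K \<tau>, of "cone_chain K v e"] chains_outside[OF e]
    by (simp add: link_chain_cone_chain boundary_zero)
qed

text \<open>Adding the boundary of the cone over a link chain \<open>e\<close> with \<open>\<partial> e = link_chain c\<close>
  pushes \<open>c\<close> off the apex into the deletion.\<close>

lemma add_boundary_cone_chain:
  fixes c e :: "'a::linorder set \<Rightarrow> 'f::field"
  assumes K: "simplicial_complex K" and c: "c \<in> chains K k"
    and e: "e \<in> chains (link K v) j" and e_bd: "boundary (link K v) e = link_chain K v c"
  shows "c \<sigma> + boundary K (cone_chain K v e) \<sigma> = (if \<sigma> \<in> deletion K v then c \<sigma> + e \<sigma> else 0)"
proof (cases "\<sigma> \<in> K")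
  case False
  then show ?thesis
    using chains_outside[OF c] deletion_subset[of K v] by (auto simp: boundary_outside)
next
  case True
  then show ?thesis
  proof (cases rule: face_cases[where v = v])
    case 1
    then show ?thesis using boundary_cone_chain_deletion[OF K e] by simp
  next
    case (2 \<tau>)
    then have "\<sigma> \<notin> deletion K v" by (simp add: deletion_def)
    moreover have "(face_sign \<tau> v :: 'f) * face_sign \<tau> v = 1" by (rule face_sign_square)
    ultimately show ?thesis
      using 2 boundary_cone_chain_insert[OF K 2(1), of e] e_bd
      by (simp add: link_chain_def mult.assoc[symmetric])
  qed
qed

lemma deletion_part_cycle:
  fixes c e :: "'a::linorder set \<Rightarrow> 'f::field"
  assumes K: "simplicial_complex K" and c: "boundary K c = (\<lambda>_. 0)"
    and e: "e \<in> chains (link K v) j" and e_bd: "boundary (link K v) e = link_chain K v c"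
  shows "boundary (deletion K v) (\<lambda>\<sigma>. if \<sigma> \<in> deletion K v then c \<sigma> + e \<sigma> else 0) = (\<lambda>_. 0)"
proof
  fix \<tau>
  let ?D = "deletion K v"
  show "boundary ?D (\<lambda>\<sigma>. if \<sigma> \<in> ?D then c \<sigma> + e \<sigma> else 0) \<tau> = 0"
  proof (cases "\<tau> \<in> ?D")
    case True
    have D: "simplicial_complex ?D" by (rule simplicial_complex_deletion[OF K])
    have "boundary ?D (\<lambda>\<sigma>. if \<sigma> \<in> ?D then c \<sigma> + e \<sigma> else 0) = boundary ?D (\<lambda>\<sigma>. c \<sigma> + e \<sigma>)"
      by (rule boundary_cong) simp
    moreover have "boundary ?D c \<tau> = - link_chain K v c \<tau>"
      using boundary_deletion_face[OF K True, of c] c by (simp add: eq_neg_iff_add_eq_0 add.commute)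
    moreover have "boundary ?D e \<tau> = link_chain K v c \<tau>"
      using boundary_subcomplex[OF D simplicial_complex_link[OF K] link_subset_deletion[OF K] e]
      by (simp add: e_bd link_chain_def)
    ultimately show ?thesis by (simp add: boundary_add)
  qed (simp add: boundary_outside)
qed

lemma bounding_chain_from_link_and_deletion:
  fixes c e f :: "'a::linorder set \<Rightarrow> 'f::field"
  assumes K: "simplicial_complex K" and c: "c \<in> chains K k"
    and e: "e \<in> chains (link K v) k" and e_bd: "boundary (link K v) e = link_chain K v c"
    and f: "f \<in> chains (deletion K v) (k + 1)"
    and f_bd: "boundary (deletion K v) f = (\<lambda>\<sigma>. if \<sigma> \<in> deletion K v then c \<sigma> + e \<sigma> else 0)"
  shows "\<exists>g\<in>chains K (k + 1). boundary K g = c"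
proof
  let ?g = "\<lambda>\<sigma>. f \<sigma> - cone_chain K v e \<sigma>"
  show "?g \<in> chains K (k + 1)"
    using chains_mono[OF deletion_subset f] cone_chain_chains[OF K e] by (rule chains_diff)
  have "boundary K f \<sigma> = (if \<sigma> \<in> deletion K v then c \<sigma> + e \<sigma> else 0)" for \<sigma>
    using boundary_subcomplex[OF K simplicial_complex_deletion[OF K] deletion_subset f] f_bd
    by simp
  then show "boundary K ?g = c"
    using add_boundary_cone_chain[OF K c e e_bd] by (simp add: boundary_diff fun_eq_iff algebra_simps)
qed

lemma reduced_homology_vanishes_below:
  assumes "k \<le> -2"
  shows "reduced_homology_vanishes TYPE('f::field) K k"
  unfolding reduced_homology_vanishes_def
proof (intro ballI impI)
  fix c :: "'a::linorder set \<Rightarrow> 'f" assume "c \<in> chains K k"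
  then have "c = (\<lambda>_. 0)" using assms by (auto simp: chains_def)
  then show "\<exists>d\<in>chains K (k + 1). boundary K d = c"
    using chains_zero boundary_zero by blast
qed

text \<open>A chain-level form of the long exact sequence of the pair \<open>(K, deletion K v)\<close>, whose relative
  homology is that of \<open>link K v\<close> shifted up by one.\<close>

theorem reduced_homology_vanishes_link_deletion:
  assumes K: "simplicial_complex K"
    and lk: "reduced_homology_vanishes TYPE('f::field) (link K v) (k - 1)"
    and del: "reduced_homology_vanishes TYPE('f) (deletion K v) k"
  shows "reduced_homology_vanishes TYPE('f) K k"
  unfolding reduced_homology_vanishes_def
proof (intro ballI impI)
  fix c :: "'a::linorder set \<Rightarrow> 'f" assume c: "c \<in> chains K k" and c_bd: "boundary K c = (\<lambda>_. 0)"
  obtain e where e: "e \<in> (chains (link K v) k :: ('a set \<Rightarrow> 'f) set)"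
    and e_bd: "boundary (link K v) e = link_chain K v c"
    using lk link_chain_chains[OF K c] link_chain_cycle[OF K c_bd]
    unfolding reduced_homology_vanishes_def by force
  have "c \<sigma> \<noteq> 0 \<or> e \<sigma> \<noteq> 0" if "c \<sigma> + e \<sigma> \<noteq> 0" for \<sigma> using that by auto
  then have "(\<lambda>\<sigma>. if \<sigma> \<in> deletion K v then c \<sigma> + e \<sigma> else 0) \<in> chains (deletion K v) k"
    using c e by (auto simp: chains_def)
  then obtain f where "f \<in> (chains (deletion K v) (k + 1) :: ('a set \<Rightarrow> 'f) set)"
    and "boundary (deletion K v) f = (\<lambda>\<sigma>. if \<sigma> \<in> deletion K v then c \<sigma> + e \<sigma> else 0)"
    using del deletion_part_cycle[OF K c_bd e e_bd] unfolding reduced_homology_vanishes_def by blast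
  then show "\<exists>g\<in>chains K (k + 1). boundary K g = c"
    by (rule bounding_chain_from_link_and_deletion[OF K c e e_bd])
qed

theorem reduced_homology_vanishes_cone:
  assumes K: "simplicial_complex K" and apex: "link K v = deletion K v"
  shows "reduced_homology_vanishes TYPE('f::field) K k"
  unfolding reduced_homology_vanishes_def
proof (intro ballI impI)
  fix c :: "'a::linorder set \<Rightarrow> 'f" assume c: "c \<in> chains K k" and c_bd: "boundary K c = (\<lambda>_. 0)"
  define e where "e = (\<lambda>\<sigma>. if \<sigma> \<in> deletion K v then - c \<sigma> else 0)"
  have e: "e \<in> chains (link K v) k" using c by (auto simp: chains_def e_def apex)
  have e_bd: "boundary (link K v) e = link_chain K v c"
  proof
    fix \<tau>
    show "boundary (link K v) e \<tau> = link_chain K v c \<tau>"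
    proof (cases "\<tau> \<in> deletion K v")
      case True
      have "boundary (deletion K v) e = boundary (deletion K v) (\<lambda>\<sigma>. - c \<sigma>)"
        by (rule boundary_cong) (simp add: e_def)
      then show ?thesis
        using boundary_deletion_face[OF K True, of c] c_bd
        by (simp add: apex boundary_uminus) (simp add: add_eq_0_iff2)
    qed (simp add: apex boundary_outside link_chain_def)
  qed
  have "(\<lambda>\<sigma>. if \<sigma> \<in> deletion K v then c \<sigma> + e \<sigma> else 0) = (\<lambda>_. 0)"
    unfolding e_def by auto
  then show "\<exists>g\<in>chains K (k + 1). boundary K g = c"
    using bounding_chain_from_link_and_deletion[OF K c e e_bd chains_zero] boundary_zero by metis
qed

subsection \<open>Independence complexes\<close>

lemma ind_complex_iff: "S \<in> ind_complex W adj \<longleftrightarrow> S \<subseteq> W \<and> (\<forall>x\<in>S. \<forall>y\<in>S. \<not> adj x y)"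
  by (simp add: ind_complex_def independent_set_def)

lemma ind_complex_mono: "W \<subseteq> W' \<Longrightarrow> S \<in> ind_complex W adj \<Longrightarrow> S \<in> ind_complex W' adj"
  by (auto simp: ind_complex_iff)

lemma simplicial_complex_ind_complex:
  assumes "finite W" shows "simplicial_complex (ind_complex W adj)"
proof -
  have "\<Union>(ind_complex W adj) \<subseteq> W" by (auto simp: ind_complex_iff)
  then have "finite (\<Union>(ind_complex W adj))" using assms by (rule finite_subset)
  then show ?thesis unfolding simplicial_complex_def by (auto simp: ind_complex_iff subset_iff)
qed

lemma deletion_ind_complex: "deletion (ind_complex W adj) v = ind_complex (W - {v}) adj"
  by (auto simp: deletion_def ind_complex_iff)

lemma link_ind_complex:
  assumes sym: "\<And>x y. adj x y \<Longrightarrow> adj y x" and irrefl: "\<And>x. \<not> adj x x" and v: "v \<in> W"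
  shows "link (ind_complex W adj) v = ind_complex (W - {v} - {u. adj v u}) adj"
proof (rule set_eqI)
  fix \<sigma>
  have "(\<forall>x\<in>insert v \<sigma>. \<forall>y\<in>insert v \<sigma>. \<not> adj x y) \<longleftrightarrow>
      (\<forall>x\<in>\<sigma>. \<not> adj v x) \<and> (\<forall>x\<in>\<sigma>. \<forall>y\<in>\<sigma>. \<not> adj x y)"
    using sym irrefl by blast
  then show "\<sigma> \<in> link (ind_complex W adj) v \<longleftrightarrow> \<sigma> \<in> ind_complex (W - {v} - {u. adj v u}) adj"
    using v by (auto simp: link_def ind_complex_iff)
qed

lemma card_Diff_lower_bound:
  fixes k :: int
  assumes "finite I" "card (I \<inter> N) < m" "(k + 1) * (int m - 1) + 1 \<le> int (card I)"
  shows "k * (int m - 1) + 1 \<le> int (card (I - N))"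
  using assms card_Int_Diff[of I N] by (simp add: algebra_simps)

lemma ind_complex_homology_vanishes:
  fixes W :: "'a::linorder set" and k :: int
  assumes "finite W"
    and sym: "\<And>x y. adj x y \<Longrightarrow> adj y x" and irrefl: "\<And>x. \<not> adj x x" and m: "m \<ge> 1"
    and "\<And>v S. v \<in> W \<Longrightarrow> S \<in> ind_complex W adj \<Longrightarrow> \<forall>x\<in>S. adj v x \<Longrightarrow> card S < m"
    and "I \<in> ind_complex W adj" and "(k + 1) * (int m - 1) + 1 \<le> int (card I)"
  shows "reduced_homology_vanishes TYPE('f::field) (ind_complex W adj) k"
  using assms(1,5-7)
proof (induction "card W" arbitrary: W I k rule: less_induct)
  case less
  note star_free = less.prems(2) and I = less.prems(3) and large = less.prems(4)
  have K: "simplicial_complex (ind_complex W adj)"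
    by (rule simplicial_complex_ind_complex[OF less.prems(1)])
  show ?case
  proof (cases "k \<le> -2")
    case True
    then show ?thesis by (rule reduced_homology_vanishes_below)
  next
    case False
    with m have "(k + 1) * (int m - 1) \<ge> 0" by simp
    with large have "I \<noteq> {}" by auto
    have IW: "I \<subseteq> W" and I_indep: "\<forall>x\<in>I. \<forall>y\<in>I. \<not> adj x y" using I by (auto simp: ind_complex_iff)
    consider (isolated) v where "v \<in> W" "\<forall>u\<in>W. \<not> adj v u" | (outside) v where "v \<in> W" "v \<notin> I"
      using \<open>I \<noteq> {}\<close> IW I_indep by blast
    then show ?thesis
    proof cases
      case isolated
      then have "W - {v} - {u. adj v u} = W - {v}" by blast
      then have "link (ind_complex W adj) v = deletion (ind_complex W adj) v"
        by (simp add: link_ind_complex[OF sym irrefl isolated(1)] deletion_ind_complex)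
      then show ?thesis by (rule reduced_homology_vanishes_cone[OF K])
    next
      case outside
      let ?N = "{u. adj v u}"
      have star_free_sub:
        "\<And>u S. u \<in> W' \<Longrightarrow> S \<in> ind_complex W' adj \<Longrightarrow> \<forall>x\<in>S. adj u x \<Longrightarrow> card S < m"
        if "W' \<subseteq> W" for W'
        using star_free that ind_complex_mono by blast
      have sub: "W - {v} \<subseteq> W" "W - {v} - ?N \<subseteq> W" by auto
      have fin: "finite (W - {v})" "finite (W - {v} - ?N)" using less.prems(1) by auto
      have smaller: "card (W - {v}) < card W" "card (W - {v} - ?N) < card W"
        using card_Diff1_less[OF less.prems(1) outside(1)] card_mono[OF fin(1), of "W - {v} - ?N"]
        by auto
      have "I \<in> ind_complex (W - {v}) adj" using I outside(2) by (auto simp: ind_complex_iff)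
      from less.hyps[OF smaller(1) fin(1) star_free_sub[OF sub(1)] this large]
      have del: "reduced_homology_vanishes TYPE('f) (ind_complex (W - {v}) adj) k" .
      have "I \<inter> ?N \<in> ind_complex W adj" using I by (auto simp: ind_complex_iff)
      then have "card (I \<inter> ?N) < m" using star_free[OF outside(1)] by blast
      then have large_lk: "(k - 1 + 1) * (int m - 1) + 1 \<le> int (card (I - ?N))"
        using card_Diff_lower_bound[OF finite_subset[OF IW less.prems(1)] _ large] by simp
      have "I - ?N \<in> ind_complex (W - {v} - ?N) adj"
        using I outside(2) by (auto simp: ind_complex_iff)
      from less.hyps[OF smaller(2) fin(2) star_free_sub[OF sub(2)] this large_lk]
      have lk: "reduced_homology_vanishes TYPE('f) (ind_complex (W - {v} - ?N) adj) (k - 1)" .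
      show ?thesis
        by (rule reduced_homology_vanishes_link_deletion[OF K, where v = v])
          (simp_all add: link_ind_complex[OF sym irrefl outside(1)] deletion_ind_complex lk del)
    qed
  qed
qed

lemma card_independent_neighbours_less:
  assumes "\<not> has_induced_star V adj m" and irrefl: "\<And>x. \<not> adj x x"
    and "v \<in> V" "S \<in> ind_complex V adj" "\<forall>x\<in>S. adj v x"
  shows "card S < m"
proof (rule ccontr)
  assume "\<not> card S < m"
  then obtain L where L: "L \<subseteq> S" "card L = m" by (meson not_less obtain_subset_with_card_n)
  have "v \<notin> L" using L(1) assms(5) irrefl by blast
  moreover have "L \<subseteq> V" "\<forall>x\<in>L. adj v x" "\<forall>x\<in>L. \<forall>y\<in>L. \<not> adj x y"
    using L(1) assms(4,5) unfolding ind_complex_iff by blast+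
  ultimately have "has_induced_star V adj m"
    unfolding has_induced_star_def using assms(3) L(2) by blast
  with assms(1) show False by contradiction
qed

lemma complex_dim_attained:
  assumes "finite K" "K \<noteq> {}"
  obtains I where "I \<in> K" "complex_dim K = int (card I) - 1"
proof -
  have "Max (card ` K) \<in> card ` K" using assms by simp
  then obtain I where "I \<in> K" "card I = Max (card ` K)" by (metis imageE)
  then show ?thesis using that by (simp add: complex_dim_def)
qed

lemma le_ceiling_imp_mult_le:
  fixes k d :: int and m :: nat
  assumes m: "m \<ge> 2" and k: "k \<le> \<lceil>(real_of_int d - 2 * real m + 3) / (real m - 1)\<rceil>"
  shows "(k + 1) * (int m - 1) \<le> d"
proof -
  have "real m - 1 > 0" using m by simp
  moreover have "real_of_int k - 1 < (real_of_int d - 2 * real m + 3) / (real m - 1)"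
    using k by (simp add: le_ceiling_iff)
  ultimately have "(real_of_int k - 1) * (real m - 1) < real_of_int d - 2 * real m + 3"
    by (simp add: pos_less_divide_eq)
  then have "of_int ((k - 1) * (int m - 1)) < (of_int (d - 2 * int m + 3) :: real)"
    by simp
  then have "(k - 1) * (int m - 1) < d - 2 * int m + 3" by (simp only: of_int_less_iff)
  then show ?thesis by (simp add: algebra_simps)
qed

theorem corollary6p11:
  fixes V :: "'a::linorder set" and adj :: "'a \<Rightarrow> 'a \<Rightarrow> bool" and m :: nat and k :: int
  assumes "simple_graph V adj"
    and "m \<ge> 2"
    and "no_isolated_vertices V adj"
    and "\<not> has_induced_star V adj m"
    and "k \<le> \<lceil>(real_of_int (complex_dim (ind_complex V adj)) - 2 * real m + 3) / (real m - 1)\<rceil>"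
  shows "reduced_homology_vanishes TYPE('f::field) (ind_complex V adj) k"
proof -
  have fin: "finite V" and sym: "\<And>x y. adj x y \<Longrightarrow> adj y x" and irrefl: "\<And>x. \<not> adj x x"
    using assms(1) unfolding simple_graph_def by blast+
  have "ind_complex V adj \<subseteq> Pow V" "{} \<in> ind_complex V adj" by (auto simp: ind_complex_iff)
  then obtain I where I: "I \<in> ind_complex V adj"
    and dim: "complex_dim (ind_complex V adj) = int (card I) - 1"
    using complex_dim_attained finite_subset[OF _ finite_Pow_iff[THEN iffD2, OF fin]] by blast
  have large: "(k + 1) * (int m - 1) + 1 \<le> int (card I)"
    using le_ceiling_imp_mult_le[OF assms(2) assms(5)[unfolded dim]] by simp
  have "m \<ge> 1" using assms(2) by simp
  from ind_complex_homology_vanishes[OF fin sym irrefl this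
      card_independent_neighbours_less[OF assms(4) irrefl] I large]
  show ?thesis .
qed

end
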